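(* Let $\varphi=\frac{1+\sqrt5}{2}$. For a complex number $y$ and $n\ge1$ define $$\Big(1+\frac{y}{\varphi^n}\Big)_F^n=\prod_{k=0}^{n-1}\Big(1+(-1)^k\varphi^{\,n-1-2k}\frac{y}{\varphi^n}\Big).$$ For $q=-\varphi^2$ let $[k]_q=\frac{q^k-1}{q-1}$, $[0]_q!=1$, $[k]_q!=[1]_q[2]_q\cdots[k]_q$, and $e_q(z)=\sum_{k=0}^\infty\frac{z^k}{[k]_q!}$ (Jackson $q$-exponential). Then for every $y$, $$\lim_{n\to\infty}\Big(1+\frac{y}{\varphi^n}\Big)_F^n=e_{-\varphi^2}\Big(\frac{y}{\sqrt5}\Big).$$ *)

theory Defs
  imports "HOL-Analysis.Analysis"
begin

definition golden :: real where "golden = (1 + sqrt 5) / 2"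

definition fib_power :: "complex \<Rightarrow> nat \<Rightarrow> complex" where
  "fib_power y n = (\<Prod>k<n. 1 + (-1)^k * complex_of_real (golden powi (int n - 1 - 2 * int k))
                              * (y / complex_of_real (golden ^ n)))"

definition q_number :: "real \<Rightarrow> nat \<Rightarrow> real" where
  "q_number q k = (q ^ k - 1) / (q - 1)"

definition q_factorial :: "real \<Rightarrow> nat \<Rightarrow> real" where
  "q_factorial q k = (\<Prod>j\<in>{1..k}. q_number q j)"

definition jackson_exp :: "real \<Rightarrow> complex \<Rightarrow> complex" where
  "jackson_exp q z = (\<Sum>k. z ^ k / complex_of_real (q_factorial q k))"

end

theory Submission
  imports Defs
begin

text \<open>The Jackson exponential satisfies \<open>e\<^sub>q(qz) = (1 + (q - 1) z) e\<^sub>q(z)\<close>: coefficientwise,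
  \<open>(q\<^sup>k - 1) z\<^sup>k / [k]\<^sub>q! = (q - 1) z \<cdot> z\<^sup>k\<^sup>-\<^sup>1 / [k - 1]\<^sub>q!\<close>. Iterating it gives
  \<open>e\<^sub>q(z) = (\<Prod>k<n. 1 + (q - 1) z / q\<^sup>k\<^sup>+\<^sup>1) \<cdot> e\<^sub>q(z / q\<^sup>n)\<close>, and for \<open>|q| > 1\<close> the last
  factor tends to \<open>e\<^sub>q(0) = 1\<close>. For \<open>q = -\<phi>\<^sup>2\<close> and \<open>z = y / \<surd>5\<close>, the identity
  \<open>\<phi>\<^sup>2 + 1 = \<phi> \<surd>5\<close> turns the \<open>k\<close>-th factor of this product into the \<open>k\<close>-th factor
  of \<open>(1 + y / \<phi>\<^sup>n)\<^sub>F\<^sup>n\<close>.\<close>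

lemma q_factorial_0 [simp]: "q_factorial q 0 = 1"
  by (simp add: q_factorial_def)

lemma q_factorial_Suc: "q_factorial q (Suc k) = q_factorial q k * q_number q (Suc k)"
  by (simp add: q_factorial_def prod.cl_ivl_Suc)

lemma q_number_times_q_minus_1:
  assumes "q \<noteq> 1"
  shows "q_number q k * (q - 1) = q ^ k - 1"
  using assms by (simp add: q_number_def)

lemma q_power_neq_1:
  fixes q :: real
  assumes "1 < \<bar>q\<bar>" "k > 0"
  shows "q ^ k \<noteq> 1"
proof -
  have "1 < \<bar>q\<bar> ^ k" using assms by (simp add: one_less_power)
  thus ?thesis by (auto simp: power_abs[symmetric])
qed

lemma q_number_nonzero:
  assumes "1 < \<bar>q\<bar>" "k > 0"
  shows "q_number q k \<noteq> 0"
  using q_power_neq_1[OF assms] assms(1) by (auto simp: q_number_def)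

lemma q_factorial_nonzero:
  assumes "1 < \<bar>q\<bar>"
  shows "q_factorial q k \<noteq> 0"
  using q_number_nonzero[OF assms] by (simp add: q_factorial_def)

lemma q_number_at_infinity:
  assumes "1 < \<bar>q\<bar>"
  shows "filterlim (q_number q) at_infinity sequentially"
proof -
  have "filterlim (\<lambda>k. inverse (q - 1) * (q ^ k + - 1)) at_infinity sequentially"
    using assms
    by (intro tendsto_mult_filterlim_at_infinity tendsto_add_filterlim_at_infinity'
          filterlim_realpow_sequentially_gt1 tendsto_const) auto
  also have "(\<lambda>k. inverse (q - 1) * (q ^ k + - 1)) = q_number q"
    by (auto simp: q_number_def field_simps)
  finally show ?thesis .
qed

lemma summable_jackson_exp:
  assumes "1 < \<bar>q\<bar>"
  shows "summable (\<lambda>k. z ^ k / complex_of_real (q_factorial q k))"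
proof -
  have "2 * norm z + 1 > 0" using norm_ge_zero[of z] by linarith
  hence "eventually (\<lambda>k. 2 * norm z + 1 \<le> norm (q_number q k)) sequentially"
    using q_number_at_infinity[OF assms] unfolding filterlim_at_infinity[OF order_refl] by blast
  hence "eventually (\<lambda>k. 2 * norm z + 1 \<le> \<bar>q_number q (Suc k)\<bar>) sequentially"
    by (subst eventually_sequentially_Suc) simp
  then obtain N where N: "\<And>k. k \<ge> N \<Longrightarrow> 2 * norm z + 1 \<le> \<bar>q_number q (Suc k)\<bar>"
    by (auto simp: eventually_sequentially)
  show ?thesis
  proof (rule summable_ratio_test[of "1 / 2" N])
    fix k assume "k \<ge> N"
    have "\<bar>q_number q (Suc k)\<bar> > 0" using q_number_nonzero[OF assms] by simp
    hence ratio: "norm z / \<bar>q_number q (Suc k)\<bar> \<le> 1 / 2"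
      using N[OF \<open>k \<ge> N\<close>] by (simp add: divide_le_eq)
    have "norm (z ^ Suc k / complex_of_real (q_factorial q (Suc k)))
            = norm z / \<bar>q_number q (Suc k)\<bar> * norm (z ^ k / complex_of_real (q_factorial q k))"
      by (simp add: q_factorial_Suc norm_mult norm_divide norm_power abs_mult)
    also have "\<dots> \<le> 1 / 2 * norm (z ^ k / complex_of_real (q_factorial q k))"
      using ratio by (rule mult_right_mono) simp
    finally show "norm (z ^ Suc k / complex_of_real (q_factorial q (Suc k)))
          \<le> 1 / 2 * norm (z ^ k / complex_of_real (q_factorial q k))" .
  qed simp
qed

lemma jackson_exp_powser:
  "jackson_exp q z = (\<Sum>k. inverse (complex_of_real (q_factorial q k)) * z ^ k)"
  by (simp add: jackson_exp_def field_simps)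

lemma jackson_exp_0 [simp]: "jackson_exp q 0 = 1"
  unfolding jackson_exp_powser by (subst powser_zero) simp

lemma isCont_jackson_exp:
  assumes "1 < \<bar>q\<bar>"
  shows "isCont (jackson_exp q) z"
  unfolding jackson_exp_powser[abs_def]
  by (rule isCont_powser_converges_everywhere) (use summable_jackson_exp[OF assms] in \<open>simp add: field_simps\<close>)

lemma jackson_exp_mult_q:
  assumes "1 < \<bar>q\<bar>"
  shows "jackson_exp q (of_real q * z) = (1 + of_real (q - 1) * z) * jackson_exp q z"
proof -
  define c where "c k = complex_of_real (q_factorial q k)" for k
  define a where "a k = z ^ k / c k" for k
  define b where "b k = (of_real q * z) ^ k / c k" for k
  have a_sums: "a sums jackson_exp q z"
    unfolding a_def c_def jackson_exp_def by (intro summable_sums summable_jackson_exp assms)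
  have b_sums: "b sums jackson_exp q (of_real q * z)"
    unfolding b_def c_def jackson_exp_def by (intro summable_sums summable_jackson_exp assms)
  have "b (Suc k) - a (Suc k) = of_real (q - 1) * z * a k" for k
  proof -
    have "q ^ Suc k - 1 = (q - 1) * q_number q (Suc k)"
      using q_number_times_q_minus_1[of q "Suc k"] assms by (auto simp: mult.commute)
    hence eq: "of_real (q ^ Suc k) - 1 = complex_of_real (q - 1) * of_real (q_number q (Suc k))"
      by (metis of_real_1 of_real_diff of_real_mult)
    have nz: "c k \<noteq> 0" "q_number q (Suc k) \<noteq> 0"
      using q_factorial_nonzero q_number_nonzero assms by (auto simp: c_def)
    have "b (Suc k) - a (Suc k) = (of_real (q ^ Suc k) - 1) * z ^ Suc k / c (Suc k)"
      by (simp add: a_def b_def power_mult_distrib diff_divide_distrib left_diff_distrib)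
    also have "\<dots> = of_real (q - 1) * of_real (q_number q (Suc k)) * z ^ Suc k
                      / (c k * of_real (q_number q (Suc k)))"
      by (simp only: eq c_def q_factorial_Suc of_real_mult)
    also have "\<dots> = of_real (q - 1) * z * a k"
      using nz by (simp add: a_def)
    finally show ?thesis .
  qed
  hence "(\<lambda>k. b (Suc k) - a (Suc k)) sums (of_real (q - 1) * z * jackson_exp q z)"
    using sums_mult[OF a_sums] by simp
  hence "(\<lambda>k. b k - a k) sums (of_real (q - 1) * z * jackson_exp q z)"
    using sums_Suc_iff[of "\<lambda>k. b k - a k"] by (simp add: a_def b_def)
  moreover have "(\<lambda>k. b k - a k) sums (jackson_exp q (of_real q * z) - jackson_exp q z)"
    by (rule sums_diff[OF b_sums a_sums])
  ultimately have "jackson_exp q (of_real q * z) - jackson_exp q z = of_real (q - 1) * z * jackson_exp q z"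
    by (rule sums_unique2[symmetric])
  thus ?thesis by (simp add: algebra_simps)
qed

lemma jackson_exp_eq_prod:
  assumes "1 < \<bar>q\<bar>"
  shows "jackson_exp q z
           = (\<Prod>k<n. 1 + of_real ((q - 1) / q ^ Suc k) * z) * jackson_exp q (z / of_real q ^ n)"
proof (induction n)
  case (Suc n)
  have "q \<noteq> 0" using assms by auto
  hence "jackson_exp q (z / of_real q ^ n)
           = (1 + of_real ((q - 1) / q ^ Suc n) * z) * jackson_exp q (z / of_real q ^ Suc n)"
    using jackson_exp_mult_q[OF assms, of "z / of_real q ^ Suc n"] by (simp add: field_simps)
  thus ?case using Suc.IH by (simp add: mult_ac)
qed simp

theorem tendsto_q_product_jackson_exp:
  assumes "1 < \<bar>q\<bar>"
  shows "(\<lambda>n. \<Prod>k<n. 1 + of_real ((q - 1) / q ^ Suc k) * z) \<longlonglongrightarrow> jackson_exp q z"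
proof -
  have "(\<lambda>n. z / of_real q ^ n) \<longlonglongrightarrow> 0"
    using assms by (intro tendsto_divide_0[OF tendsto_const] filterlim_realpow_sequentially_gt1) simp
  from isCont_tendsto_compose[OF isCont_jackson_exp[OF assms] this]
  have tail: "(\<lambda>n. jackson_exp q (z / of_real q ^ n)) \<longlonglongrightarrow> 1"
    by simp
  hence "eventually (\<lambda>n. jackson_exp q (z / of_real q ^ n) \<noteq> 0) sequentially"
    by (rule tendsto_imp_eventually_ne) simp
  hence "eventually (\<lambda>n. jackson_exp q z / jackson_exp q (z / of_real q ^ n)
                        = (\<Prod>k<n. 1 + of_real ((q - 1) / q ^ Suc k) * z)) sequentially"
  proof (rule eventually_mono)
    fix n assume "jackson_exp q (z / of_real q ^ n) \<noteq> 0"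
    with jackson_exp_eq_prod[OF assms, of z n]
    show "jackson_exp q z / jackson_exp q (z / of_real q ^ n)
            = (\<Prod>k<n. 1 + of_real ((q - 1) / q ^ Suc k) * z)"
      by simp
  qed
  moreover have "(\<lambda>n. jackson_exp q z / jackson_exp q (z / of_real q ^ n)) \<longlonglongrightarrow> jackson_exp q z"
    using tendsto_divide[OF tendsto_const tail] by simp
  ultimately show ?thesis by (rule Lim_transform_eventually[rotated])
qed

lemma golden_gt_1: "1 < golden"
proof -
  have "1 < sqrt 5" by (simp add: real_less_rsqrt)
  thus ?thesis by (simp add: golden_def)
qed

lemma golden_sq_plus_1: "golden\<^sup>2 + 1 = golden * sqrt 5"
  by (simp add: golden_def power2_eq_square field_simps)

lemma golden_powi_shift: "golden powi (int n - 1 - 2 * int k) = golden ^ n / golden ^ (2 * k + 1)"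
proof -
  have "golden powi (int n - int (2 * k + 1)) = golden powi int n / golden powi int (2 * k + 1)"
    using golden_gt_1 by (intro power_int_diff) simp
  moreover have "int n - 1 - 2 * int k = int n - int (2 * k + 1)" by simp
  ultimately show ?thesis by (simp only: power_int_of_nat)
qed

lemma fib_power_factor:
  "(-1) ^ k * golden powi (int n - 1 - 2 * int k) / golden ^ n
     = (- golden\<^sup>2 - 1) / (- golden\<^sup>2) ^ Suc k / sqrt 5"
proof -
  have g: "golden \<noteq> 0" using golden_gt_1 by simp
  have num: "- golden\<^sup>2 - 1 = - (golden * sqrt 5)"
    using golden_sq_plus_1 by linarith
  have "(- golden\<^sup>2) ^ Suc k = (-1) ^ Suc k * golden ^ (2 * Suc k)"
    using power_minus[of "golden\<^sup>2" "Suc k"] by (simp only: power_mult)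
  also have "golden ^ (2 * Suc k) = golden * golden ^ (2 * k + 1)"
    by simp
  finally have den: "(- golden\<^sup>2) ^ Suc k = - ((-1) ^ k * golden * golden ^ (2 * k + 1))"
    by simp
  have "(-1) ^ k * golden powi (int n - 1 - 2 * int k) / golden ^ n = (-1) ^ k / golden ^ (2 * k + 1)"
    using g by (simp add: golden_powi_shift)
  also have "\<dots> = (- golden\<^sup>2 - 1) / (- golden\<^sup>2) ^ Suc k / sqrt 5"
    unfolding num den using g by (cases "even k") (simp_all add: field_simps)
  finally show ?thesis .
qed

lemma fib_power_eq_q_product:
  "fib_power y n = (\<Prod>k<n. 1 + of_real ((- golden\<^sup>2 - 1) / (- golden\<^sup>2) ^ Suc k) * (y / of_real (sqrt 5)))"
  unfolding fib_power_def
proof (rule prod.cong)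
  fix k
  have "(-1) ^ k * complex_of_real (golden powi (int n - 1 - 2 * int k)) * (y / complex_of_real (golden ^ n))
          = of_real ((-1) ^ k * golden powi (int n - 1 - 2 * int k) / golden ^ n) * y"
    by simp
  also have "\<dots> = of_real ((- golden\<^sup>2 - 1) / (- golden\<^sup>2) ^ Suc k) * (y / of_real (sqrt 5))"
    unfolding fib_power_factor by simp
  finally show "1 + (-1) ^ k * complex_of_real (golden powi (int n - 1 - 2 * int k)) * (y / complex_of_real (golden ^ n))
          = 1 + of_real ((- golden\<^sup>2 - 1) / (- golden\<^sup>2) ^ Suc k) * (y / of_real (sqrt 5))" by simp
qed simp

theorem mainTheorem13:
  fixes y :: complex
  shows "(\<lambda>n. fib_power y n) \<longlonglongrightarrow> jackson_exp (- (golden ^ 2)) (y / complex_of_real (sqrt 5))"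
proof -
  have "1 < \<bar>- golden\<^sup>2\<bar>"
    using golden_gt_1 by (simp add: one_less_power)
  from tendsto_q_product_jackson_exp[OF this] show ?thesis
    unfolding fib_power_eq_q_product .
qed

end
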